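(* Let $1\le i\le n$. For all $w=t_q\overline w\in W$ (with $q\in M$, $\overline w\in W_0$), $$\mathcal{L}_{\Lambda_i}(w)=\frac{a_i^\vee}{a_0^\vee}\Big(\frac h2|q|^2-\mathrm{ht}(q)\Big)+h\,(\overline w(\omega_i)\,|\,q)+\mathrm{ht}(\omega_i-\overline w(\omega_i)).$$ In particular, $\mathcal{L}_{\Lambda_i}(t_q)=\frac{a_i^\vee}{a_0^\vee}\big(\frac h2|q|^2-\mathrm{ht}(q)\big)+h(\omega_i\,|\,q)$.
   Context: Let $A=(a_{ij})_{0\le i,j\le n}$ be a generalized Cartan matrix of affine type with realization $\Delta=\{\alpha_0,\dots,\alpha_n\}\subset\mathfrak h^*$, $\Delta^\vee\subset\mathfrak h$, $\langle\alpha_j,\alpha_i^\vee\rangle=a_{ij}$. $(a_i)$ and $(a_i^\vee)$ are the primitive positive integer kernel vectors of $A$ and $A^T$; $h=\sum a_i$, $\delta=\sum a_i\alpha_i$, $c=\sum a_i^\vee\alpha_i^\vee$, $\theta=\delta-a_0\alpha_0$. $V_0=\bigoplus_{i\ge1}\mathbb{R}\alpha_i$ with the standard invariant form $(\cdot|\cdot)$ ($(\alpha_i|\alpha_j)=a_i^\vee a_i^{-1}a_{ij}$). $W_0=\langle s_1,\dots,s_n\rangle$, $M=\mathbb{Z}$-span of the $W_0$-orbit of $\theta/a_0$, and $W=\langle s_0,\dots,s_n\rangle=T(M)\rtimes W_0$ where $t_x(v)=v+\langle v,c\rangle x-((v|x)+\frac12|x|^2\langle v,c\rangle)\delta$. $\omega_i$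 are the finite fundamental weights, $\Lambda_i=\frac{a_i^\vee}{a_0^\vee}\Lambda_0+\omega_i$ the affine fundamental weights; $\rho^\vee\in\mathfrak h$ with $\langle\alpha_j,\rho^\vee\rangle=1$ for all $j$. $\mathcal{L}_\Lambda(g)=\langle\Lambda-g\Lambda,\rho^\vee\rangle$. For $x=\sum_{i\ge1}x_i\alpha_i\in V_0$, $\mathrm{ht}(x)=\sum x_i$. *)

theory Defs
  imports "HOL-Analysis.Analysis"
begin

(* Cartan matrix A = (A i j)_{0 <= i,j <= n}; entries outside {0..n} are irrelevant. *)

definition is_gcm :: "nat \<Rightarrow> (nat \<Rightarrow> nat \<Rightarrow> int) \<Rightarrow> bool" where
  "is_gcm n A \<longleftrightarrow> (\<forall>i\<le>n. A i i = 2) \<and>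
     (\<forall>i\<le>n. \<forall>j\<le>n. i \<noteq> j \<longrightarrow> A i j \<le> 0) \<and>
     (\<forall>i\<le>n. \<forall>j\<le>n. A i j = 0 \<longleftrightarrow> A j i = 0)"

definition indecomposable :: "nat \<Rightarrow> (nat \<Rightarrow> nat \<Rightarrow> int) \<Rightarrow> bool" where
  "indecomposable n A \<longleftrightarrow>
     \<not> (\<exists>S. S \<subseteq> {0..n} \<and> S \<noteq> {} \<and> S \<noteq> {0..n} \<and>
            (\<forall>i\<in>S. \<forall>j\<in>{0..n} - S. A i j = 0))"

(* Kac, Infinite dim. Lie algebras, Cor. 4.3: an indecomposable GCM is of affine type
   iff there is a vector u > 0 with A u = 0. *)
definition affine_type :: "nat \<Rightarrow> (nat \<Rightarrow> nat \<Rightarrow> int) \<Rightarrow> bool" where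
  "affine_type n A \<longleftrightarrow> is_gcm n A \<and> indecomposable n A \<and>
     (\<exists>u::nat \<Rightarrow> real. (\<forall>i\<le>n. u i > 0) \<and> (\<forall>i\<le>n. (\<Sum>j\<le>n. of_int (A i j) * u j) = 0))"

definition prim_kernel_vec :: "nat \<Rightarrow> (nat \<Rightarrow> nat \<Rightarrow> int) \<Rightarrow> (nat \<Rightarrow> int) \<Rightarrow> bool" where
  "prim_kernel_vec n A x \<longleftrightarrow> (\<forall>i\<le>n. x i > 0) \<and>
     (\<forall>i\<le>n. (\<Sum>j\<le>n. A i j * x j) = 0) \<and>
     (\<forall>d::int. (\<forall>i\<le>n. d dvd x i) \<longrightarrow> is_unit d)"

definition transp_mat :: "(nat \<Rightarrow> nat \<Rightarrow> int) \<Rightarrow> (nat \<Rightarrow> nat \<Rightarrow> int)" where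
  "transp_mat A = (\<lambda>i j. A j i)"

(* Standard realization of A.
   h^* has basis alpha_0,...,alpha_n, Lambda_0; an element v :: hstar has coordinate
   v j on alpha_j (0 <= j <= n) and v (n+1) on Lambda_0.
   h has basis alpha_0^vee,...,alpha_n^vee, d; an element r :: hvec has coordinate r i on
   alpha_i^vee and r (n+1) on d.
   Pairing: <alpha_j, alpha_i^vee> = a_ij, <Lambda_0, alpha_i^vee> = delta_{i0},
            <alpha_j, d> = delta_{j0}, <Lambda_0, d> = 0. *)
type_synonym hstar = "nat \<Rightarrow> real"
type_synonym hvec = "nat \<Rightarrow> real"

definition alpha :: "nat \<Rightarrow> hstar" where
  "alpha j = (\<lambda>k. if k = j then 1 else 0)"

definition Lam0 :: "nat \<Rightarrow> hstar" where
  "Lam0 n = (\<lambda>k. if k = Suc n then 1 else 0)"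

(* <v, alpha_i^vee> *)
definition copair :: "nat \<Rightarrow> (nat \<Rightarrow> nat \<Rightarrow> int) \<Rightarrow> hstar \<Rightarrow> nat \<Rightarrow> real" where
  "copair n A v i = (\<Sum>j\<le>n. of_int (A i j) * v j) + (if i = 0 then v (Suc n) else 0)"

definition hpair :: "nat \<Rightarrow> (nat \<Rightarrow> nat \<Rightarrow> int) \<Rightarrow> hstar \<Rightarrow> hvec \<Rightarrow> real" where
  "hpair n A v r = (\<Sum>i\<le>n. r i * copair n A v i) + r (Suc n) * v 0"

definition srefl :: "nat \<Rightarrow> (nat \<Rightarrow> nat \<Rightarrow> int) \<Rightarrow> nat \<Rightarrow> hstar \<Rightarrow> hstar" where
  "srefl n A i v = (\<lambda>k. v k - (if k = i then copair n A v i else 0))"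

(* group generated by the s_i, i \<in> I (reflections are involutions, so the generated
   monoid is the generated group) *)
inductive_set refl_group :: "nat \<Rightarrow> (nat \<Rightarrow> nat \<Rightarrow> int) \<Rightarrow> nat set \<Rightarrow> (hstar \<Rightarrow> hstar) set"
  for n A I where
  id_in: "id \<in> refl_group n A I"
| step: "g \<in> refl_group n A I \<Longrightarrow> i \<in> I \<Longrightarrow> srefl n A i \<circ> g \<in> refl_group n A I"

definition weyl :: "nat \<Rightarrow> (nat \<Rightarrow> nat \<Rightarrow> int) \<Rightarrow> (hstar \<Rightarrow> hstar) set" where
  "weyl n A = refl_group n A {0..n}"

definition weyl0 :: "nat \<Rightarrow> (nat \<Rightarrow> nat \<Rightarrow> int) \<Rightarrow> (hstar \<Rightarrow> hstar) set" where
  "weyl0 n A = refl_group n A {1..n}"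

(* Standard invariant form on h^* (Kac 6.2):
   (alpha_i|alpha_j) = a_i^vee a_i^{-1} a_ij, (alpha_i|Lambda_0) = delta_{i0} a_0^vee a_0^{-1},
   (Lambda_0|Lambda_0) = 0. *)
definition invform :: "nat \<Rightarrow> (nat \<Rightarrow> nat \<Rightarrow> int) \<Rightarrow> (nat \<Rightarrow> int) \<Rightarrow> (nat \<Rightarrow> int)
                        \<Rightarrow> hstar \<Rightarrow> hstar \<Rightarrow> real" where
  "invform n A a av u v =
     (\<Sum>i\<le>n. \<Sum>j\<le>n. u i * v j * (of_int (av i) / of_int (a i)) * of_int (A i j))
     + (u (Suc n) * v 0 + u 0 * v (Suc n)) * (of_int (av 0) / of_int (a 0))"

(* <v, c> with c = sum a_i^vee alpha_i^vee *)
definition cpair :: "nat \<Rightarrow> (nat \<Rightarrow> nat \<Rightarrow> int) \<Rightarrow> (nat \<Rightarrow> int) \<Rightarrow> hstar \<Rightarrow> real" where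
  "cpair n A av v = (\<Sum>i\<le>n. of_int (av i) * copair n A v i)"

definition delta :: "nat \<Rightarrow> (nat \<Rightarrow> int) \<Rightarrow> hstar" where
  "delta n a = (\<lambda>k. if k \<le> n then of_int (a k) else 0)"

definition theta :: "nat \<Rightarrow> (nat \<Rightarrow> int) \<Rightarrow> hstar" where
  "theta n a = (\<lambda>k. delta n a k - of_int (a 0) * alpha 0 k)"

(* V_0 = real span of alpha_1, ..., alpha_n *)
definition V0 :: "nat \<Rightarrow> hstar set" where
  "V0 n = {v. v 0 = 0 \<and> (\<forall>k>n. v k = 0)}"

definition latM :: "nat \<Rightarrow> (nat \<Rightarrow> nat \<Rightarrow> int) \<Rightarrow> (nat \<Rightarrow> int) \<Rightarrow> hstar set" where
  "latM n A a = {x. \<exists>(m::nat) (c::nat \<Rightarrow> int) g. (\<forall>k<m. g k \<in> weyl0 n A) \<and>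
       x = (\<lambda>p. \<Sum>k<m. of_int (c k) *
              g k (\<lambda>l. theta n a l / of_int (a 0)) p)}"

definition transl :: "nat \<Rightarrow> (nat \<Rightarrow> nat \<Rightarrow> int) \<Rightarrow> (nat \<Rightarrow> int) \<Rightarrow> (nat \<Rightarrow> int)
                       \<Rightarrow> hstar \<Rightarrow> hstar \<Rightarrow> hstar" where
  "transl n A a av x v = (\<lambda>k. v k + cpair n A av v * x k
      - (invform n A a av v x + 1/2 * invform n A a av x x * cpair n A av v) * delta n a k)"

definition fin_fund_weight :: "nat \<Rightarrow> (nat \<Rightarrow> nat \<Rightarrow> int) \<Rightarrow> nat \<Rightarrow> hstar \<Rightarrow> bool" where
  "fin_fund_weight n A i w \<longleftrightarrow> w \<in> V0 n \<and>
     (\<forall>j\<in>{1..n}. copair n A w j = (if j = i then 1 else 0))"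

definition aff_fund_weight :: "nat \<Rightarrow> (nat \<Rightarrow> int) \<Rightarrow> nat \<Rightarrow> hstar \<Rightarrow> hstar" where
  "aff_fund_weight n av i w = (\<lambda>k. of_int (av i) / of_int (av 0) * Lam0 n k + w k)"

definition is_rho_check :: "nat \<Rightarrow> (nat \<Rightarrow> nat \<Rightarrow> int) \<Rightarrow> hvec \<Rightarrow> bool" where
  "is_rho_check n A r \<longleftrightarrow> (\<forall>j\<le>n. hpair n A (alpha j) r = 1)"

definition Lfun :: "nat \<Rightarrow> (nat \<Rightarrow> nat \<Rightarrow> int) \<Rightarrow> hvec \<Rightarrow> hstar \<Rightarrow> (hstar \<Rightarrow> hstar) \<Rightarrow> real" where
  "Lfun n A r Lam g = hpair n A (\<lambda>k. Lam k - g Lam k) r"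

definition ht :: "nat \<Rightarrow> hstar \<Rightarrow> real" where
  "ht n x = (\<Sum>i\<in>{1..n}. x i)"

definition coxeter :: "nat \<Rightarrow> (nat \<Rightarrow> int) \<Rightarrow> real" where
  "coxeter n a = (\<Sum>i\<le>n. of_int (a i))"

end

theory Submission
  imports Defs
begin

(* Write the weight as l Lambda_0 + omega with omega in V_0. The finite Weyl group fixes Lambda_0
   and preserves V_0, so wb(l Lambda_0 + omega) = l Lambda_0 + wb omega. As <Lambda_0, c> = a_0^vee
   and (Lambda_0 | q) = 0 for q in V_0, the translation formula gives
   t_q wb Lambda = l Lambda_0 + wb omega + a_0^vee l q - ((wb omega | q) + a_0^vee l/2 |q|^2) delta.
   Pairing with rho^vee sums the coordinates on alpha_0, ..., alpha_n, which turns elements of V_0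
   into heights and delta into the Coxeter number h. *)

lemma copair_alpha: "j \<le> n \<Longrightarrow> copair n A (alpha j) i = of_int (A i j)"
  unfolding copair_def alpha_def by (simp add: if_distrib cong: if_cong)

lemma sum_atMost_times_if_zero:
  "(\<Sum>i\<le>(n::nat). f i * (if i = 0 then x else 0)) = f 0 * (x :: 'a :: comm_semiring_1)"
  by (induction n) auto

lemma hpair_alpha:
  "j \<le> n \<Longrightarrow>
    hpair n A (alpha j) r = (\<Sum>i\<le>n. r i * of_int (A i j)) + (if j = 0 then r (Suc n) else 0)"
  unfolding hpair_def by (simp add: copair_alpha) (simp add: alpha_def)

lemma hpair_expand:
  "hpair n A v r = (\<Sum>j\<le>n. v j * hpair n A (alpha j) r) + r 0 * v (Suc n)"
proof -
  have "(\<Sum>j\<le>n. v j * hpair n A (alpha j) r)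
      = (\<Sum>j\<le>n. v j * (\<Sum>i\<le>n. r i * of_int (A i j))) + v 0 * r (Suc n)"
    by (simp add: hpair_alpha distrib_left sum.distrib sum_atMost_times_if_zero)
  also have "\<dots> = (\<Sum>i\<le>n. r i * (\<Sum>j\<le>n. of_int (A i j) * v j)) + r (Suc n) * v 0"
    by (simp add: sum_distrib_left algebra_simps) (subst sum.swap, simp)
  also have "\<dots> = hpair n A v r - r 0 * v (Suc n)"
    unfolding hpair_def copair_def by (simp add: distrib_left sum.distrib sum_atMost_times_if_zero)
  finally show ?thesis by simp
qed

lemma hpair_rho_check:
  assumes "is_rho_check n A r"
  shows "hpair n A v r = (\<Sum>j\<le>n. v j) + r 0 * v (Suc n)"
  using assms unfolding is_rho_check_def by (simp add: hpair_expand[of n A v r])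

lemma cpair_eq_Lam0_coeff:
  assumes kernel: "\<forall>j\<le>n. (\<Sum>i\<le>n. A i j * av i) = 0"
  shows "cpair n A av v = of_int (av 0) * v (Suc n)"
proof -
  have "cpair n A av v
      = (\<Sum>i\<le>n. of_int (av i) * (\<Sum>j\<le>n. of_int (A i j) * v j)) + of_int (av 0) * v (Suc n)"
    unfolding cpair_def copair_def by (simp add: distrib_left sum.distrib sum_atMost_times_if_zero)
  also have "(\<Sum>i\<le>n. of_int (av i) * (\<Sum>j\<le>n. of_int (A i j) * v j))
      = (\<Sum>j\<le>n. of_int (\<Sum>i\<le>n. A i j * av i) * v j)"
    by (simp add: sum_distrib_left sum_distrib_right algebra_simps) (subst sum.swap, simp)
  also have "\<dots> = 0"
    using kernel by simp
  finally show ?thesis by simp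
qed

lemma refl_group_fixes_coord:
  "g \<in> refl_group n A I \<Longrightarrow> k \<notin> I \<Longrightarrow> g v k = v k"
  by (induction g rule: refl_group.induct) (auto simp: srefl_def)

lemma refl_group_add_Lam0:
  assumes "g \<in> refl_group n A I" and "0 \<notin> I"
  shows "g (\<lambda>k. l * Lam0 n k + v k) = (\<lambda>k. l * Lam0 n k + g v k)"
  using assms
proof (induction g rule: refl_group.induct)
  case id_in
  then show ?case by simp
next
  case (step g i)
  then have IH: "g (\<lambda>k. l * Lam0 n k + v k) = (\<lambda>k. l * Lam0 n k + g v k)"
    by blast
  have "copair n A (\<lambda>k. l * Lam0 n k + g v k) i = copair n A (g v) i"
    using step unfolding copair_def Lam0_def by (auto intro!: sum.cong)
  then show ?case by (simp add: srefl_def IH fun_eq_iff)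
qed

lemma weyl0_preserves_V0:
  assumes "g \<in> weyl0 n A" and "v \<in> V0 n"
  shows "g v \<in> V0 n"
proof -
  have "g v k = v k" if "k = 0 \<or> k > n" for k
    using assms(1) that unfolding weyl0_def by (auto intro: refl_group_fixes_coord)
  with assms(2) show ?thesis unfolding V0_def by auto
qed

lemma latM_subset_V0: "latM n A a \<subseteq> V0 n"
proof
  fix x assume "x \<in> latM n A a"
  then obtain m c g where g: "\<forall>k<(m::nat). g k \<in> weyl0 n A"
    and x: "x = (\<lambda>p. \<Sum>k<m. of_int (c k) * g k (\<lambda>l. theta n a l / of_int (a 0)) p)"
    unfolding latM_def by blast
  have "(\<lambda>l. theta n a l / of_int (a 0)) \<in> V0 n"
    by (auto simp: V0_def theta_def delta_def alpha_def)
  then have "g k (\<lambda>l. theta n a l / of_int (a 0)) \<in> V0 n" if "k < m" for k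
    using g that by (blast intro: weyl0_preserves_V0)
  then show "x \<in> V0 n" unfolding x V0_def by simp
qed

lemma invform_Lam0_left:
  assumes "q \<in> V0 n"
  shows "invform n A a av (\<lambda>k. l * Lam0 n k + u k) q = invform n A a av u q"
  using assms unfolding invform_def V0_def Lam0_def by (auto intro!: sum.cong)

lemma transl_level:
  assumes kernel: "\<forall>j\<le>n. (\<Sum>i\<le>n. A i j * av i) = 0"
    and "u \<in> V0 n" and "q \<in> V0 n"
  shows "transl n A a av q (\<lambda>k. l * Lam0 n k + u k) =
    (\<lambda>k. l * Lam0 n k + u k + of_int (av 0) * l * q k
      - (invform n A a av u q + 1/2 * invform n A a av q q * (of_int (av 0) * l)) * delta n a k)"
proof -
  have "cpair n A av (\<lambda>k. l * Lam0 n k + u k) = of_int (av 0) * l"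
    using assms(2) by (simp add: cpair_eq_Lam0_coeff[OF kernel] Lam0_def V0_def)
  with assms(3) show ?thesis
    unfolding transl_def by (simp add: invform_Lam0_left)
qed

lemma sum_atMost_eq_ht: "f 0 = 0 \<Longrightarrow> (\<Sum>j\<le>n. f j) = ht n f"
  unfolding ht_def by (simp add: atMost_atLeast0 sum.atLeast_Suc_atMost)

lemma Lfun_transl_weyl0:
  assumes kernel: "\<forall>j\<le>n. (\<Sum>i\<le>n. A i j * av i) = 0"
    and rho: "is_rho_check n A rho"
    and om: "om \<in> V0 n" and wb: "wb \<in> weyl0 n A" and q: "q \<in> V0 n"
  shows "Lfun n A rho (\<lambda>k. l * Lam0 n k + om k) (transl n A a av q \<circ> wb) =
    of_int (av 0) * l * (coxeter n a / 2 * invform n A a av q q - ht n q)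
    + coxeter n a * invform n A a av (wb om) q + ht n (\<lambda>k. om k - wb om k)"
proof -
  define u where "u = wb om"
  define X where "X = invform n A a av u q + 1/2 * invform n A a av q q * (of_int (av 0) * l)"
  have u: "u \<in> V0 n"
    unfolding u_def using wb om by (rule weyl0_preserves_V0)
  have wb_weight: "wb (\<lambda>k. l * Lam0 n k + om k) = (\<lambda>k. l * Lam0 n k + u k)"
    using wb unfolding u_def weyl0_def by (simp add: refl_group_add_Lam0)
  have diff: "(\<lambda>k. l * Lam0 n k + om k - (transl n A a av q \<circ> wb) (\<lambda>k. l * Lam0 n k + om k) k)
      = (\<lambda>k. om k - u k - of_int (av 0) * l * q k + X * delta n a k)"
    by (simp add: wb_weight transl_level[OF kernel u q] X_def fun_eq_iff)
  have "Lfun n A rho (\<lambda>k. l * Lam0 n k + om k) (transl n A a av q \<circ> wb)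
      = (\<Sum>j\<le>n. om j - u j) - of_int (av 0) * l * (\<Sum>j\<le>n. q j) + X * (\<Sum>j\<le>n. delta n a j)"
    using om u q unfolding Lfun_def diff hpair_rho_check[OF rho]
    by (simp add: V0_def delta_def sum.distrib sum_subtractf sum_distrib_left)
  also have "\<dots> = ht n (\<lambda>k. om k - u k) - of_int (av 0) * l * ht n q + X * coxeter n a"
    using om u q by (simp add: sum_atMost_eq_ht V0_def delta_def coxeter_def)
  finally show ?thesis
    unfolding X_def u_def by (simp add: algebra_simps)
qed

theorem proposition2p2:
  fixes n i :: nat and A :: "nat \<Rightarrow> nat \<Rightarrow> int" and a av :: "nat \<Rightarrow> int"
    and om :: hstar and rho :: hvec
  assumes "affine_type n A"
    and "prim_kernel_vec n A a"
    and "prim_kernel_vec n (transp_mat A) av"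
    and "av 0 = 1"
    and "1 \<le> i" and "i \<le> n"
    and "fin_fund_weight n A i om"
    and "is_rho_check n A rho"
  shows "(\<forall>w q wb. w \<in> weyl n A \<longrightarrow> q \<in> latM n A a \<longrightarrow> wb \<in> weyl0 n A \<longrightarrow>
            w = transl n A a av q \<circ> wb \<longrightarrow>
            Lfun n A rho (aff_fund_weight n av i om) w =
              of_int (av i) / of_int (av 0) *
                (coxeter n a / 2 * invform n A a av q q - ht n q)
              + coxeter n a * invform n A a av (wb om) q
              + ht n (\<lambda>k. om k - wb om k))
       \<and> (\<forall>q. q \<in> latM n A a \<longrightarrow> transl n A a av q \<in> weyl n A \<longrightarrow>
            Lfun n A rho (aff_fund_weight n av i om) (transl n A a av q) =
              of_int (av i) / of_int (av 0) *
                (coxeter n a / 2 * invform n A a av q q - ht n q)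
              + coxeter n a * invform n A a av om q)"
proof -
  \<comment> \<open>The identity holds for all q in V_0 and wb in W_0.\<close>
  have kernel: "\<forall>j\<le>n. (\<Sum>l\<le>n. A l j * av l) = 0"
    using assms(3) unfolding prim_kernel_vec_def transp_mat_def by auto
  have om: "om \<in> V0 n"
    using assms(7) unfolding fin_fund_weight_def by simp
  note Lfun = Lfun_transl_weyl0[OF kernel assms(8) om,
      where a = a and l = "of_int (av i) / of_int (av 0)"]
  have id: "id \<in> weyl0 n A"
    unfolding weyl0_def by (rule refl_group.id_in)
  have q: "q \<in> V0 n" if "q \<in> latM n A a" for q
    using that latM_subset_V0 by blast
  show ?thesis
    using Lfun[OF _ q] Lfun[OF id q] assms(4) by (auto simp: aff_fund_weight_def ht_def)
qed

end
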